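(* Let $q$ be a prime power, $2\le k\le n$, and let $\mathcal{C}\subseteq\mathbb{F}_q^n$ be a linear code of dimension $k$. Then $$\mathbb{E}[\mathcal{C}] = nH_n - \sum_{s=k}^{n-1} \frac{\beta_{s-k}(\mathcal{C}^\perp, n-s)}{\binom{n-1}{s}}.$$
   Context: $H_m=\sum_{i=1}^m 1/i$. $\mathbb{E}[\mathcal{C}]$ is $\mathbb{E}[G]$ for any generator matrix $G\in\mathbb{F}_q^{k\times n}$ of $\mathcal{C}$, where $\mathbb{E}[G]$ is the expected number of draws when columns of $G$ are drawn independently and uniformly at random from its $n$ columns (with repetition) until the drawn columns span $\mathbb{F}_q^k$. $\mathcal{C}^\perp$ is the dual code (standard inner product). For $x\in\mathbb{F}_q^n$, $\sigma(x)=\{i:x_i\ne 0\}$; for a code $\mathcal{D}$ and $S\subseteq\{1,\dots,n\}$, $\mathcal{D}(S)=\{x\in\mathcal{D}:\sigma(x)\subseteq S\}$, $S^{\mathsf c}=\{1,\dots,n\}\setminus S$, and for an integer $\ell$, $\beta_\ell(\mathcal{D},s)=|\{S\subseteq\{1,\dots,n\}: |S|=s,\ \dim(\mathcal{D}(S^{\mathsf c}))=\ell\}|$. *)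

theory Defs
  imports "HOL-Analysis.Analysis"
begin

text \<open>Linear codes of length n over a finite field 'a are subspaces of 'a^'n, where the
  finite type 'n (with CARD('n) = n) indexes the coordinates.  A generator matrix
  G \<in> F^(k x n) is a matrix of type 'a^'n^'k (CARD('k) = k) whose k rows form a basis of C.\<close>

definition is_generator_matrix :: "'a::field^'n^'k \<Rightarrow> ('a^'n) set \<Rightarrow> bool" where
  "is_generator_matrix G C \<longleftrightarrow>
     inj (\<lambda>i. row i G) \<and> vec.independent (rows G) \<and> vec.span (rows G) = C"

definition cols_span :: "'a::field^'n^'k \<Rightarrow> 'n set \<Rightarrow> bool" where
  "cols_span G J \<longleftrightarrow> vec.span ((\<lambda>j. column j G) ` J) = UNIV"

text \<open>Probability that the stopping time T (number of draws until the drawn columns span F^k)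
  equals t, when positions are drawn independently and uniformly from the n positions:
  a draw sequence of length t is a list of t positions, each sequence having probability n^-t.\<close>
definition prob_stop_at :: "'a::field^'n::finite^'k \<Rightarrow> nat \<Rightarrow> real" where
  "prob_stop_at G t =
     real (card {xs :: 'n list. length xs = t \<and> cols_span G (set xs)
                               \<and> \<not> cols_span G (set (butlast xs))})
     / real (CARD('n)) ^ t"

definition expected_draws :: "'a::field^'n::finite^'k \<Rightarrow> real" where
  "expected_draws G = (\<Sum>t. real t * prob_stop_at G t)"

definition supp :: "'a::zero^'n \<Rightarrow> 'n set" where
  "supp x = {i. x $ i \<noteq> 0}"

definition dual_code :: "('a::comm_ring^'n::finite) set \<Rightarrow> ('a^'n) set" where
  "dual_code C = {y. \<forall>x\<in>C. (\<Sum>i\<in>UNIV. x $ i * y $ i) = 0}"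

definition shortened :: "('a::zero^'n) set \<Rightarrow> 'n set \<Rightarrow> ('a^'n) set" where
  "shortened D S = {x\<in>D. supp x \<subseteq> S}"

definition beta :: "nat \<Rightarrow> ('a::field^'n::finite) set \<Rightarrow> nat \<Rightarrow> nat" where
  "beta l D s = card {S :: 'n set. card S = s \<and> vec.dim (shortened D (- S)) = l}"

end

theory Submission
  imports Defs "HOL-Combinatorics.Stirling"
begin

text \<open>
  Let T be the number of draws until the drawn columns span. Spanning is a monotone property of
  the set of drawn positions, so E[T] is the sum over t of Pr(T > t); splitting the event T > t
  according to the exact set A of positions drawn so far, and using that a! S(t, a) words of
  length t have a given letter set of size a (S the Stirling numbers of the second kind), gives
  E[T] = sum of 1 / binom(n - 1, |A|) over all non-spanning A, since the sum over t of
  a! S(t, a) / n^t equals 1 / binom(n - 1, a). Over all proper subsets A this sum is n H_n.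
  The proper spanning sets are subtracted: by rank-nullity a set of s columns spans iff the dual
  code shortened to it has dimension s - k, and passing to complements turns their number into
  beta_(s-k)(C^perp, n - s).
\<close>

section \<open>Words with a prescribed set of letters\<close>

lemma lists_set_eq_Suc_length:
  "{xs. length xs = Suc t \<and> set xs = A} =
     (\<Union>x\<in>A. (#) x ` ({ys. length ys = t \<and> set ys = A} \<union> {ys. length ys = t \<and> set ys = A - {x}}))"
proof (intro set_eqI iffI)
  fix xs assume "xs \<in> {xs. length xs = Suc t \<and> set xs = A}"
  then obtain x ys where xs: "xs = x # ys" "length ys = t" "insert x (set ys) = A"
    by (cases xs) auto
  then have "set ys = A \<or> set ys = A - {x}"
    by (cases "x \<in> set ys") auto
  with xs show "xs \<in> (\<Union>x\<in>A. (#) x ` ({ys. length ys = t \<and> set ys = A} \<union> {ys. length ys = t \<and> set ys = A - {x}}))"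
    by blast
next
  fix xs assume "xs \<in> (\<Union>x\<in>A. (#) x ` ({ys. length ys = t \<and> set ys = A} \<union> {ys. length ys = t \<and> set ys = A - {x}}))"
  then obtain x ys where "xs = x # ys" "x \<in> A" "length ys = t" "set ys = A \<or> set ys = A - {x}"
    by blast
  then show "xs \<in> {xs. length xs = Suc t \<and> set xs = A}"
    by auto
qed

lemma finite_lists_set_eq:
  "finite A \<Longrightarrow> finite {xs. length xs = t \<and> set xs = A}"
  by (rule finite_subset[OF _ finite_lists_length_eq[of A t]]) auto

lemma fact_Stirling_Suc:
  "fact m * Stirling (Suc t) m = m * (fact m * Stirling t m + fact (m - 1) * Stirling t (m - 1))"
proof (cases m)
  case (Suc j)
  then show ?thesis
    by (simp add: algebra_simps)
qed simp

lemma card_lists_set_eq: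
  assumes "finite A"
  shows "card {xs. length xs = t \<and> set xs = A} = fact (card A) * Stirling t (card A)"
  using assms
proof (induction t arbitrary: A)
  case 0
  have "{xs. length xs = 0 \<and> set xs = A} = (if A = {} then {[]} else {})"
    by auto
  then show ?case
    using "0.prems" by (simp add: card_gt_0_iff)
next
  case (Suc t)
  let ?L = "\<lambda>B. {ys. length ys = t \<and> set ys = B}"
  have fin: "finite (?L B)" if "finite B" for B :: "'a set"
    using that by (rule finite_lists_set_eq)
  have disj: "(#) x ` X \<inter> (#) y ` Y = {}" if "x \<noteq> y" for x y :: 'a and X Y
    using that by auto
  have "card {xs. length xs = Suc t \<and> set xs = A} = (\<Sum>x\<in>A. card ((#) x ` (?L A \<union> ?L (A - {x}))))"
    unfolding lists_set_eq_Suc_length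
    by (intro card_UN_disjoint Suc.prems ballI impI finite_imageI finite_UnI fin finite_Diff)
       (use disj in blast)
  also have "\<dots> = (\<Sum>x\<in>A. card (?L A) + card (?L (A - {x})))"
  proof (rule sum.cong[OF refl])
    fix x assume "x \<in> A"
    then have "?L A \<inter> ?L (A - {x}) = {}"
      by blast
    then show "card ((#) x ` (?L A \<union> ?L (A - {x}))) = card (?L A) + card (?L (A - {x}))"
      using Suc.prems by (simp add: card_image card_Un_disjoint fin)
  qed
  also have "\<dots> = (\<Sum>x\<in>A. fact (card A) * Stirling t (card A)
                            + fact (card A - 1) * Stirling t (card A - 1))"
  proof (rule sum.cong[OF refl])
    fix x assume "x \<in> A"
    then show "card (?L A) + card (?L (A - {x})) = fact (card A) * Stirling t (card A)
                            + fact (card A - 1) * Stirling t (card A - 1)"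
      using Suc.prems by (simp add: Suc.IH card_Diff_singleton)
  qed
  also have "\<dots> = fact (card A) * Stirling (Suc t) (card A)"
    by (simp add: fact_Stirling_Suc)
  finally show ?case .
qed

lemma fact_Stirling_le: "fact a * Stirling t a \<le> a ^ t"
proof -
  have "fact a * Stirling t a = card {xs. length xs = t \<and> set xs = {..<a}}"
    by (simp add: card_lists_set_eq)
  also have "\<dots> \<le> card {xs. set xs \<subseteq> {..<a} \<and> length xs = t}"
    by (rule card_mono[OF finite_lists_length_eq]) auto
  also have "\<dots> = a ^ t"
    by (simp add: card_lists_length_eq)
  finally show ?thesis .
qed

lemma summable_fact_Stirling:
  assumes "a < N"
  shows "summable (\<lambda>t. real (fact a * Stirling t a) / real N ^ t)"
proof (rule summable_comparison_test')
  show "summable (\<lambda>t. (real a / real N) ^ t)"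
    using assms by (intro summable_geometric) simp
  show "norm (real (fact a * Stirling t a) / real N ^ t) \<le> (real a / real N) ^ t" for t
  proof -
    have "real (fact a * Stirling t a) \<le> real a ^ t"
      using fact_Stirling_le[of a t] by (metis of_nat_le_iff of_nat_power)
    then show ?thesis
      unfolding power_divide by (simp add: divide_right_mono)
  qed
qed

lemma binomial_Suc_ratio:
  assumes "Suc k < N"
  shows "(real N - real (Suc k)) * real ((N - 1) choose k) = real (Suc k) * real ((N - 1) choose Suc k)"
proof -
  have "Suc k * ((N - 1) choose Suc k) = (N - 1 - k) * ((N - 1) choose k)"
    by (metis binomial_absorption binomial_absorb_comp)
  then have "real (Suc k) * real ((N - 1) choose Suc k) = real (N - 1 - k) * real ((N - 1) choose k)"
    by (metis of_nat_mult)
  then show ?thesis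
    using assms by simp
qed

lemma fact_Stirling_sums:
  assumes "a < N"
  shows "(\<lambda>t. real (fact a * Stirling t a) / real N ^ t) sums (1 / real ((N - 1) choose a))"
  using assms
proof (induction a)
  case 0
  have "(\<lambda>t. real (fact 0 * Stirling t 0) / real N ^ t) = (\<lambda>t. if t = 0 then 1 else 0)"
  proof
    fix t show "real (fact 0 * Stirling t 0) / real N ^ t = (if t = 0 then 1 else 0)"
      by (cases t) simp_all
  qed
  then show ?case
    using sums_single[of 0 "\<lambda>_. 1 :: real"] by simp
next
  case (Suc b)
  define r where "r t = real (fact (Suc b) * Stirling t (Suc b)) / real N ^ t" for t
  define q where "q t = real (fact b * Stirling t b) / real N ^ t" for t
  have N: "real (Suc b) < real N"
    using Suc.prems by linarith
  have q: "q sums (1 / real ((N - 1) choose b))"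
    using Suc unfolding q_def by simp
  have r: "r sums suminf r"
    using summable_fact_Stirling[OF Suc.prems] unfolding r_def by (rule summable_sums)
  have r_Suc: "r (Suc t) = real (Suc b) / real N * (r t + q t)" for t
    using N unfolding r_def q_def by (simp add: field_simps)
  have "(\<lambda>t. r (Suc t)) sums suminf r"
    using r sums_Suc_iff[of r] by (simp add: r_def)
  moreover have "(\<lambda>t. r (Suc t)) sums (real (Suc b) / real N * (suminf r + 1 / real ((N - 1) choose b)))"
    unfolding r_Suc by (intro sums_mult sums_add r q)
  ultimately have "suminf r = real (Suc b) / real N * (suminf r + 1 / real ((N - 1) choose b))"
    by (rule sums_unique2)
  then have "suminf r * ((real N - real (Suc b)) * real ((N - 1) choose b)) = real (Suc b)"
    using N Suc.prems by (simp add: field_simps)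
  then have "real (Suc b) * (suminf r * real ((N - 1) choose Suc b)) = real (Suc b) * 1"
    unfolding binomial_Suc_ratio[OF Suc.prems] by (simp add: ac_simps)
  then have "suminf r * real ((N - 1) choose Suc b) = 1"
    by (simp only: mult_left_cancel of_nat_eq_0_iff nat.distinct(1) not_False_eq_True)
  then have "suminf r = 1 / real ((N - 1) choose Suc b)"
    by (metis mult_zero_right eq_divide_eq zero_neq_one)
  then show ?case
    using r unfolding r_def by simp
qed

section \<open>Stopping time of a monotone property\<close>

lemma card_less_CARD: "(A :: 'a::finite set) \<noteq> UNIV \<Longrightarrow> card A < CARD('a)"
  by (simp add: psubset_card_mono psubsetI)

text \<open>If T is the first time at which the set of drawn positions satisfies P, then among the n^t
  equally likely draw sequences of length t these are the events T > t and T = t.\<close>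

definition pending_draws :: "('a set \<Rightarrow> bool) \<Rightarrow> nat \<Rightarrow> 'a list set" where
  "pending_draws P t = {xs. length xs = t \<and> \<not> P (set xs)}"

definition stopping_draws :: "('a set \<Rightarrow> bool) \<Rightarrow> nat \<Rightarrow> 'a list set" where
  "stopping_draws P t = {xs. length xs = t \<and> P (set xs) \<and> \<not> P (set (butlast xs))}"

lemma finite_lists_length_eq_Collect: "finite {xs :: 'a::finite list. length xs = t \<and> Q xs}"
  by (rule finite_subset[OF _ finite_lists_length_eq[OF finite[of UNIV], of t]]) auto

lemma card_pending_draws:
  fixes P :: "'a::finite set \<Rightarrow> bool"
  shows "card (pending_draws P t) = (\<Sum>A | \<not> P A. fact (card A) * Stirling t (card A))"
proof -
  have "pending_draws P t = (\<Union>A \<in> {A. \<not> P A}. {xs. length xs = t \<and> set xs = A})"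
    unfolding pending_draws_def by blast
  also have "card \<dots> = (\<Sum>A | \<not> P A. card {xs. length xs = t \<and> set xs = A})"
    by (intro card_UN_disjoint ballI impI finite_lists_set_eq finite) blast
  finally show ?thesis
    by (simp add: card_lists_set_eq)
qed

lemma pending_draws_series:
  fixes P :: "'a::finite set \<Rightarrow> bool"
  assumes "P UNIV"
  shows "(\<lambda>t. real (card (pending_draws P t)) / real CARD('a) ^ t)
           sums (\<Sum>A | \<not> P A. 1 / real ((CARD('a) - 1) choose card A))"
proof -
  have "(\<lambda>t. \<Sum>A | \<not> P A. real (fact (card A) * Stirling t (card A)) / real CARD('a) ^ t)
          sums (\<Sum>A | \<not> P A. 1 / real ((CARD('a) - 1) choose card A))"
  proof (rule sums_sum)
    fix A :: "'a set" assume "A \<in> {A. \<not> P A}"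
    then have "card A < CARD('a)"
      using assms by (intro card_less_CARD) auto
    then show "(\<lambda>t. real (fact (card A) * Stirling t (card A)) / real CARD('a) ^ t)
                 sums (1 / real ((CARD('a) - 1) choose card A))"
      by (rule fact_Stirling_sums)
  qed
  then show ?thesis
    by (simp add: card_pending_draws sum_divide_distrib)
qed

lemma card_pending_draws_le:
  fixes P :: "'a::finite set \<Rightarrow> bool"
  assumes "P UNIV"
  shows "card (pending_draws P t) \<le> card {A. \<not> P A} * (CARD('a) - 1) ^ t"
proof -
  have "fact (card A) * Stirling t (card A) \<le> (CARD('a) - 1) ^ t" if "\<not> P A" for A :: "'a set"
  proof -
    have "card A \<le> CARD('a) - 1"
      using card_less_CARD[of A] assms that by fastforce
    then show ?thesis
      using fact_Stirling_le[of "card A" t] power_mono[of "card A" "CARD('a) - 1" t] by linarith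
  qed
  then have "card (pending_draws P t) \<le> (\<Sum>A | \<not> P A. (CARD('a) - 1) ^ t)"
    unfolding card_pending_draws by (intro sum_mono) auto
  then show ?thesis
    by simp
qed

lemma pending_draws_weighted_limit:
  fixes P :: "'a::finite set \<Rightarrow> bool"
  assumes "P UNIV"
  shows "(\<lambda>t. real t * (real (card (pending_draws P t)) / real CARD('a) ^ t)) \<longlonglongrightarrow> 0"
proof (rule Lim_null_comparison)
  let ?q = "(real CARD('a) - 1) / real CARD('a)"
  let ?M = "real (card {A. \<not> P A})"
  show "(\<lambda>t. ?M * (real t * ?q ^ t)) \<longlonglongrightarrow> 0"
    by (intro tendsto_mult_right_zero powser_times_n_limit_0) simp
  show "\<forall>\<^sub>F t in sequentially.
          norm (real t * (real (card (pending_draws P t)) / real CARD('a) ^ t)) \<le> ?M * (real t * ?q ^ t)"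
  proof (intro always_eventually allI)
    fix t
    have "real (card (pending_draws P t)) \<le> real (card {A. \<not> P A} * (CARD('a) - 1) ^ t)"
      using card_pending_draws_le[of P t, OF assms] by (rule of_nat_mono)
    also have "\<dots> = ?M * (real CARD('a) - 1) ^ t"
      by (simp add: Suc_leI)
    finally have "real (card (pending_draws P t)) \<le> ?M * (real CARD('a) - 1) ^ t" .
    then have "real (card (pending_draws P t)) / real CARD('a) ^ t \<le> ?M * ?q ^ t"
      by (simp add: power_divide divide_right_mono)
    then have "real t * (real (card (pending_draws P t)) / real CARD('a) ^ t) \<le> real t * (?M * ?q ^ t)"
      by (rule mult_left_mono) simp
    then show "norm (real t * (real (card (pending_draws P t)) / real CARD('a) ^ t)) \<le> ?M * (real t * ?q ^ t)"
      by (simp add: ac_simps)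
  qed
qed

lemma stopping_draws_Un_pending_draws:
  assumes "mono P"
  shows "stopping_draws P (Suc t) \<union> pending_draws P (Suc t) = (\<lambda>(ys, x). ys @ [x]) ` (pending_draws P t \<times> UNIV)"
proof (intro set_eqI iffI)
  fix xs assume xs: "xs \<in> stopping_draws P (Suc t) \<union> pending_draws P (Suc t)"
  then have len: "length xs = Suc t"
    by (auto simp: stopping_draws_def pending_draws_def)
  have "\<not> P (set (butlast xs))"
  proof
    assume "P (set (butlast xs))"
    moreover have "set (butlast xs) \<subseteq> set xs"
      by (auto dest: in_set_butlastD)
    ultimately have "P (set xs)"
      using monoD[OF assms] le_boolD by blast
    with xs \<open>P (set (butlast xs))\<close> show False
      by (auto simp: stopping_draws_def pending_draws_def)
  qed
  moreover have "xs = butlast xs @ [last xs]"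
    using len by (intro append_butlast_last_id[symmetric]) auto
  ultimately show "xs \<in> (\<lambda>(ys, x). ys @ [x]) ` (pending_draws P t \<times> UNIV)"
    using len by (intro image_eqI[of _ _ "(butlast xs, last xs)"]) (auto simp: pending_draws_def)
next
  fix xs assume "xs \<in> (\<lambda>(ys, x). ys @ [x]) ` (pending_draws P t \<times> UNIV)"
  then obtain ys x where "xs = ys @ [x]" "length ys = t" "\<not> P (set ys)"
    by (auto simp: pending_draws_def)
  then show "xs \<in> stopping_draws P (Suc t) \<union> pending_draws P (Suc t)"
    by (auto simp: stopping_draws_def pending_draws_def)
qed

lemma card_stopping_draws_Suc:
  fixes P :: "'a::finite set \<Rightarrow> bool"
  assumes "mono P"
  shows "card (stopping_draws P (Suc t)) + card (pending_draws P (Suc t)) = CARD('a) * card (pending_draws P t)"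
proof -
  have "card (stopping_draws P (Suc t)) + card (pending_draws P (Suc t))
          = card (stopping_draws P (Suc t) \<union> pending_draws P (Suc t))"
    by (rule card_Un_disjoint[symmetric])
       (auto simp: stopping_draws_def pending_draws_def intro: finite_lists_length_eq_Collect)
  also have "\<dots> = card (pending_draws P t \<times> (UNIV :: 'a set))"
    unfolding stopping_draws_Un_pending_draws[OF assms] by (rule card_image) (auto simp: inj_on_def)
  finally show ?thesis
    by (simp add: card_cartesian_product)
qed

lemma expected_stopping_time:
  fixes P :: "'a::finite set \<Rightarrow> bool"
  assumes "mono P" and "P UNIV"
  shows "(\<lambda>t. real t * (real (card (stopping_draws P t)) / real CARD('a) ^ t))
           sums (\<Sum>A | \<not> P A. 1 / real ((CARD('a) - 1) choose card A))"
proof -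
  define a where "a t = real (card (pending_draws P t)) / real CARD('a) ^ t" for t
  define p where "p t = real (card (stopping_draws P t)) / real CARD('a) ^ t" for t
  have p_Suc: "p (Suc t) = a t - a (Suc t)" for t
    using arg_cong[where f = real, OF card_stopping_draws_Suc[of P t, OF assms(1)]]
    unfolding a_def p_def by (simp add: field_simps)
  txt \<open>Abel summation: E[T] is the sum of Pr(T > t), because t Pr(T > t) tends to 0.\<close>
  have partial_sums: "(\<Sum>t<Suc m. real t * p t) = (\<Sum>t<m. a t) - real m * a m" for m
  proof (induction m)
    case (Suc m)
    then show ?case
      by (simp add: p_Suc algebra_simps)
  qed simp
  have "(\<lambda>m. (\<Sum>t<m. a t) - real m * a m) \<longlonglongrightarrow> (\<Sum>A | \<not> P A. 1 / real ((CARD('a) - 1) choose card A)) - 0"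
    using pending_draws_series[of P, OF assms(2)] pending_draws_weighted_limit[of P, OF assms(2)]
    unfolding sums_def a_def by (intro tendsto_diff)
  then have "(\<lambda>m. \<Sum>t<Suc m. real t * p t) \<longlonglongrightarrow> (\<Sum>A | \<not> P A. 1 / real ((CARD('a) - 1) choose card A))"
    unfolding partial_sums by simp
  then show ?thesis
    unfolding sums_def p_def by (rule filterlim_sequentially_Suc[THEN iffD1])
qed

section \<open>Rank-nullity and shortened dual codes\<close>

lemma obtain_inj_on_span_same_image:
  fixes f :: "'a::field^'n \<Rightarrow> 'a^'m"
  assumes lf: "Vector_Spaces.linear (*s) (*s) f" and W: "vec.subspace W"
  obtains B where "vec.span B \<subseteq> W" and "inj_on f (vec.span B)" and "f ` vec.span B = f ` W"
proof -
  interpret lf: Vector_Spaces.linear "(*s)" "(*s)" f by (rule lf)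
  obtain C where C: "C \<subseteq> f ` W" "vec.independent C" "f ` W \<subseteq> vec.span C"
    by (rule vec.basis_exists)
  have "\<forall>c\<in>C. \<exists>w. w \<in> W \<and> f w = c"
    using C(1) by blast
  then obtain g where g: "\<And>c. c \<in> C \<Longrightarrow> g c \<in> W \<and> f (g c) = c"
    by metis
  have fg: "f ` g ` C = C"
    using g by force
  have "vec.span (g ` C) \<subseteq> W"
    using g by (intro vec.span_minimal W) auto
  moreover have "inj_on f (g ` C)"
    using g by (auto intro!: inj_onI)
  then have "inj_on f (vec.span (g ` C))"
    using lf.inj_on_span_iff_independent_image[of "g ` C"] C(2) fg by simp
  moreover have "f ` vec.span (g ` C) = f ` W"
  proof -
    have "vec.span C = f ` W"
      using C(1,3) lf.subspace_image[OF W] by (rule vec.span_subspace)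
    then show ?thesis
      using lf.span_image[of "g ` C"] fg by simp
  qed
  ultimately show thesis
    by (rule that)
qed

lemma dim_kernel_plus_dim_image:
  fixes f :: "'a::field^'n \<Rightarrow> 'a^'m"
  assumes lf: "Vector_Spaces.linear (*s) (*s) f" and W: "vec.subspace W"
  shows "vec.dim {x\<in>W. f x = 0} + vec.dim (f ` W) = vec.dim W"
proof -
  interpret lf: Vector_Spaces.linear "(*s)" "(*s)" f by (rule lf)
  obtain B where B: "vec.span B \<subseteq> W" "inj_on f (vec.span B)" "f ` vec.span B = f ` W"
    using obtain_inj_on_span_same_image[OF lf W] .
  define K where "K = {x\<in>W. f x = 0}"
  have K: "vec.subspace K"
    unfolding K_def using W by (auto simp: vec.subspace_def lf.add lf.scale)
  have "K \<inter> vec.span B = {0}"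
  proof (intro equalityI subsetI)
    fix x assume x: "x \<in> K \<inter> vec.span B"
    then have "f x = f 0"
      unfolding K_def by simp
    then have "x = 0"
      using x by (intro inj_onD[OF B(2)]) (auto simp: vec.span_zero)
    then show "x \<in> {0}"
      by simp
  qed (simp add: vec.subspace_0[OF K] vec.span_zero)
  moreover have "{x + y |x y. x \<in> K \<and> y \<in> vec.span B} = W"
  proof (intro equalityI subsetI)
    fix w assume "w \<in> {x + y |x y. x \<in> K \<and> y \<in> vec.span B}"
    then obtain x y where "w = x + y" "x \<in> W" "y \<in> W"
      using B(1) unfolding K_def by blast
    then show "w \<in> W"
      using vec.subspace_add[OF W] by simp
  next
    fix w assume w: "w \<in> W"
    then obtain v where v: "v \<in> vec.span B" "f v = f w"
      using B(3) by (metis imageE imageI)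
    then have "w - v \<in> K"
      using w B(1) W unfolding K_def by (auto simp: lf.diff vec.subspace_diff)
    then show "w \<in> {x + y |x y. x \<in> K \<and> y \<in> vec.span B}"
      using v(1) by (intro CollectI exI[of _ "w - v"] exI[of _ v]) simp
  qed
  moreover have "vec.dim (vec.span B) = vec.dim (f ` W)"
    using vec.dim_image_eq[OF lf, of "vec.span B"] B(2,3) by (simp add: vec.span_span)
  ultimately show ?thesis
    using vec.dim_sums_Int[OF K vec.subspace_span[of B]] unfolding K_def by simp
qed

lemma dual_code_row_space:
  fixes G :: "'a::field^'n::finite^'k::finite"
  shows "dual_code (vec.span (rows G)) = {y. G *v y = 0}"
proof (intro set_eqI iffI)
  fix y assume y: "y \<in> dual_code (vec.span (rows G))"
  have "(G *v y) $ i = 0" for i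
  proof -
    have "row i G \<in> vec.span (rows G)"
      by (rule vec.span_base) (auto simp: rows_def)
    then show ?thesis
      using y by (simp add: dual_code_def matrix_vector_mult_def row_def)
  qed
  then show "y \<in> {y. G *v y = 0}"
    by (simp add: vec_eq_iff)
next
  fix y assume "y \<in> {y. G *v y = 0}"
  then have G0: "G *v y = 0"
    by simp
  define Z where "Z = {x :: 'a^'n. (\<Sum>i\<in>UNIV. x $ i * y $ i) = 0}"
  have "vec.subspace Z"
    unfolding vec.subspace_def Z_def
    by (simp add: distrib_right sum.distrib sum_distrib_left[symmetric] mult.assoc)
  moreover have "rows G \<subseteq> Z"
  proof
    fix x assume "x \<in> rows G"
    then obtain i where "x = row i G"
      by (auto simp: rows_def)
    moreover have "(G *v y) $ i = 0"
      using G0 by simp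
    ultimately show "x \<in> Z"
      unfolding Z_def by (simp add: matrix_vector_mult_def row_def)
  qed
  ultimately have "vec.span (rows G) \<subseteq> Z"
    by (intro vec.span_minimal)
  then show "y \<in> dual_code (vec.span (rows G))"
    unfolding dual_code_def Z_def by blast
qed

lemma matrix_vector_mult_axis_one:
  fixes G :: "'a::semiring_1^'n::finite^'k"
  shows "G *v axis j 1 = column j G"
proof -
  have "(\<Sum>x\<in>UNIV. G $ i $ x * (if x = j then 1 else 0)) = G $ i $ j" for i
    by (simp add: if_distrib cong: if_cong)
  then show ?thesis
    by (simp add: vec_eq_iff matrix_vector_mult_def column_def axis_def)
qed

lemma span_axis_image:
  "vec.span ((\<lambda>j. axis j (1::'a::field)) ` T) = {y :: 'a^'n::finite. supp y \<subseteq> T}"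
proof
  have "supp y \<subseteq> T \<longleftrightarrow> (\<forall>i. i \<notin> T \<longrightarrow> y $ i = 0)" for y :: "'a^'n"
    by (auto simp: supp_def)
  then have "vec.subspace {y :: 'a^'n. supp y \<subseteq> T}"
    by (auto simp: vec.subspace_def)
  then show "vec.span ((\<lambda>j. axis j 1) ` T) \<subseteq> {y :: 'a^'n. supp y \<subseteq> T}"
    by (rule vec.span_minimal[rotated]) (auto simp: supp_def axis_def split: if_splits)
  show "{y :: 'a^'n. supp y \<subseteq> T} \<subseteq> vec.span ((\<lambda>j. axis j 1) ` T)"
  proof
    fix y :: "'a^'n" assume "y \<in> {y. supp y \<subseteq> T}"
    then have yT: "\<And>i. i \<notin> T \<Longrightarrow> y $ i = 0"
      by (auto simp: supp_def)
    have "y = (\<Sum>j\<in>T. y $ j *s axis j 1)"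
    proof (subst vec_eq_iff, rule allI)
      fix i
      have "(\<Sum>j\<in>T. y $ j *s axis j (1::'a)) $ i = (\<Sum>j\<in>T. y $ j * (if i = j then 1 else 0))"
        by (simp add: axis_def)
      also have "\<dots> = y $ i"
        using yT by (simp add: if_distrib cong: if_cong)
      finally show "y $ i = (\<Sum>j\<in>T. y $ j *s axis j 1) $ i"
        by simp
    qed
    also have "\<dots> \<in> vec.span ((\<lambda>j. axis j 1) ` T)"
      by (intro vec.span_sum vec.span_scale vec.span_base) auto
    finally show "y \<in> vec.span ((\<lambda>j. axis j 1) ` T)" .
  qed
qed

lemma dim_supp_subset:
  "vec.dim {y :: 'a::field^'n::finite. supp y \<subseteq> T} = card T"
proof -
  have "vec.independent ((\<lambda>j. axis j (1::'a)) ` T)"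
    by (rule vec.independent_mono[OF independent_cart_basis]) (auto simp: cart_basis_def)
  moreover have "inj_on (\<lambda>j. axis j (1::'a)) T"
    by (auto simp: inj_on_def axis_eq_axis)
  ultimately show ?thesis
    unfolding span_axis_image[symmetric] by (simp add: vec.dim_eq_card_independent card_image)
qed

text \<open>Dependencies among the columns indexed by \<open>T\<close> are the codewords of the dual code supported in \<open>T\<close>.\<close>

lemma dim_shortened_dual_plus_dim_columns:
  fixes G :: "'a::field^'n::finite^'k::finite"
  shows "vec.dim (shortened (dual_code (vec.span (rows G))) T) + vec.dim ((\<lambda>j. column j G) ` T) = card T"
proof -
  define W where "W = {y :: 'a^'n. supp y \<subseteq> T}"
  have "vec.subspace W"
    unfolding W_def span_axis_image[symmetric] by simp
  then have "vec.dim {x \<in> W. G *v x = 0} + vec.dim ((*v) G ` W) = vec.dim W"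
    by (rule dim_kernel_plus_dim_image[OF matrix_vector_mul_linear_gen])
  moreover have "shortened (dual_code (vec.span (rows G))) T = {x \<in> W. G *v x = 0}"
    unfolding shortened_def dual_code_row_space W_def by auto
  moreover have "vec.dim ((*v) G ` W) = vec.dim ((\<lambda>j. column j G) ` T)"
  proof -
    have "(*v) G ` W = vec.span ((*v) G ` (\<lambda>j. axis j 1) ` T)"
      unfolding W_def span_axis_image[symmetric] vec.linear_span_image[OF matrix_vector_mul_linear_gen] ..
    also have "(*v) G ` (\<lambda>j. axis j 1) ` T = (\<lambda>j. column j G) ` T"
      by (auto simp: matrix_vector_mult_axis_one image_image)
    finally show ?thesis
      by simp
  qed
  ultimately show ?thesis
    unfolding W_def dim_supp_subset by simp
qed

lemma cols_span_iff_dim: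
  fixes G :: "'a::field^'n::finite^'k::finite"
  shows "cols_span G T \<longleftrightarrow> vec.dim ((\<lambda>j. column j G) ` T) = CARD('k)"
  using vec.dim_eq_full[of "(\<lambda>j. column j G) ` T"]
  unfolding cols_span_def vec.dimension_def card_cart_basis by simp

lemma mono_cols_span: "mono (cols_span G)"
  unfolding cols_span_def
  by (intro monoI le_boolI) (metis image_mono top.extremum_uniqueI vec.span_mono)

lemma cols_span_card_ge:
  fixes G :: "'a::field^'n::finite^'k::finite"
  assumes "cols_span G A"
  shows "CARD('k) \<le> card A"
proof -
  have "CARD('k) = vec.dim ((\<lambda>j. column j G) ` A)"
    using assms cols_span_iff_dim by metis
  also have "\<dots> \<le> card ((\<lambda>j. column j G) ` A)"
    by (rule vec.dim_le_card') simp
  also have "\<dots> \<le> card A"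
    by (rule card_image_le) simp
  finally show ?thesis .
qed

lemma vec_dim_rows_le_dim_columns:
  fixes G :: "'a::field^'n::finite^'k::finite"
  shows "vec.dim (rows G) \<le> vec.dim (columns G)"
proof -
  obtain B where B: "B \<subseteq> columns G" "vec.independent B" "columns G \<subseteq> vec.span B"
      "card B = vec.dim (columns G)"
    by (rule vec.basis_exists)
  have finB: "finite B"
    by (rule vec.finiteI_independent[OF B(2)])
  have "\<forall>j. \<exists>u. column j G = (\<Sum>b\<in>B. u b *s b)"
    using B(3) unfolding vec.span_finite[OF finB] by (auto simp: columns_def)
  then obtain u where u: "\<And>j. column j G = (\<Sum>b\<in>B. u j b *s b)"
    by metis
  define d where "d b = (\<chi> j. u j b)" for b
  have "rows G \<subseteq> vec.span (d ` B)"
  proof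
    fix r assume "r \<in> rows G"
    then obtain i where r: "r = row i G"
      by (auto simp: rows_def)
    have "row i G = (\<Sum>b\<in>B. (b $ i) *s d b)"
    proof (subst vec_eq_iff, rule allI)
      fix j
      have "row i G $ j = column j G $ i"
        by (simp add: row_def column_def)
      also have "\<dots> = (\<Sum>b\<in>B. (b $ i) *s d b) $ j"
        unfolding u by (simp add: d_def mult.commute)
      finally show "row i G $ j = (\<Sum>b\<in>B. (b $ i) *s d b) $ j" .
    qed
    also have "\<dots> \<in> vec.span (d ` B)"
      by (intro vec.span_sum vec.span_scale vec.span_base) auto
    finally show "r \<in> vec.span (d ` B)"
      unfolding r .
  qed
  then have "vec.dim (rows G) \<le> card (d ` B)"
    by (rule vec.dim_le_card) (simp add: finB)
  also have "\<dots> \<le> card B"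
    by (rule card_image_le[OF finB])
  finally show ?thesis
    using B(4) by simp
qed

lemma generator_matrix_cols_span_UNIV:
  fixes G :: "'a::field^'n::finite^'k::finite"
  assumes "is_generator_matrix G C"
  shows "cols_span G UNIV"
proof -
  have inj: "inj (\<lambda>i. row i G)" and ind: "vec.independent (rows G)"
    using assms unfolding is_generator_matrix_def by auto
  have "rows G = range (\<lambda>i. row i G)"
    by (auto simp: rows_def)
  then have "vec.dim (rows G) = CARD('k)"
    using card_image[OF inj] vec.dim_eq_card_independent[OF ind] by simp
  then have "CARD('k) \<le> vec.dim (columns G)"
    using vec_dim_rows_le_dim_columns[of G] by simp
  moreover have "vec.dim (columns G) \<le> CARD('k)"
    by (rule dim_subset_UNIV_cart_gen)
  moreover have "columns G = (\<lambda>j. column j G) ` UNIV"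
    by (auto simp: columns_def)
  ultimately show ?thesis
    unfolding cols_span_iff_dim by simp
qed

lemma cols_span_iff_dim_shortened_dual:
  fixes G :: "'a::field^'n::finite^'k::finite"
  assumes "is_generator_matrix G C" and "CARD('k) \<le> card A"
  shows "cols_span G A \<longleftrightarrow> vec.dim (shortened (dual_code C) A) = card A - CARD('k)"
proof -
  have "C = vec.span (rows G)"
    using assms(1) unfolding is_generator_matrix_def by simp
  then have "vec.dim (shortened (dual_code C) A) + vec.dim ((\<lambda>j. column j G) ` A) = card A"
    using dim_shortened_dual_plus_dim_columns by blast
  moreover have "vec.dim ((\<lambda>j. column j G) ` A) \<le> CARD('k)"
    by (rule dim_subset_UNIV_cart_gen)
  ultimately show ?thesis
    unfolding cols_span_iff_dim using assms(2) by linarith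
qed

lemma card_Compl: "card (- A) = CARD('a) - card (A :: 'a::finite set)"
  by (simp add: Compl_eq_Diff_UNIV card_Diff_subset)

lemma card_cols_span_eq_beta:
  fixes G :: "'a::field^'n::finite^'k::finite"
  assumes "is_generator_matrix G C" and "CARD('k) \<le> s" and "s \<le> CARD('n)"
  shows "card {A. cols_span G A \<and> card A = s} = beta (s - CARD('k)) (dual_code C) (CARD('n) - s)"
proof -
  have "{S. card S = CARD('n) - s \<and> vec.dim (shortened (dual_code C) (- S)) = s - CARD('k)}
          = uminus ` {A. cols_span G A \<and> card A = s}"
  proof (intro set_eqI iffI)
    fix S :: "'n set"
    assume S: "S \<in> {S. card S = CARD('n) - s \<and> vec.dim (shortened (dual_code C) (- S)) = s - CARD('k)}"
    then have "card (- S) = s"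
      using assms(3) by (simp add: card_Compl)
    with S have "- S \<in> {A. cols_span G A \<and> card A = s}"
      using cols_span_iff_dim_shortened_dual[OF assms(1), of "- S"] assms(2) by simp
    then show "S \<in> uminus ` {A. cols_span G A \<and> card A = s}"
      by (rule rev_image_eqI) simp
  next
    fix S :: "'n set"
    assume "S \<in> uminus ` {A. cols_span G A \<and> card A = s}"
    then obtain A where "S = - A" "cols_span G A" "card A = s"
      by blast
    then show "S \<in> {S. card S = CARD('n) - s \<and> vec.dim (shortened (dual_code C) (- S)) = s - CARD('k)}"
      using cols_span_iff_dim_shortened_dual[OF assms(1), of A] assms(2) by (simp add: card_Compl)
  qed
  then show ?thesis
    unfolding beta_def by (simp add: card_image inj_on_def)
qed

section \<open>Summing over subsets by size\<close>

lemma sum_card_fibres: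
  fixes g :: "nat \<Rightarrow> 'b::comm_semiring_1"
  assumes "finite S" and "\<And>A :: 'a::finite set. Q A \<Longrightarrow> card A \<in> S"
  shows "(\<Sum>A | Q A. g (card A)) = (\<Sum>s\<in>S. of_nat (card {A. Q A \<and> card A = s}) * g s)"
proof -
  have "(\<Sum>A | Q A. g (card A)) = (\<Sum>s\<in>S. \<Sum>A | A \<in> {A. Q A} \<and> card A = s. g (card A))"
    by (rule sum.group[symmetric]) (use assms in auto)
  also have "\<dots> = (\<Sum>s\<in>S. \<Sum>A | Q A \<and> card A = s. g s)"
    by (intro sum.cong refl) auto
  finally show ?thesis
    by simp
qed

lemma sum_inverse_binomial_proper_subsets:
  "(\<Sum>A | A \<noteq> (UNIV :: 'n::finite set). 1 / real ((CARD('n) - 1) choose card A))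
     = real CARD('n) * harm CARD('n)"
proof -
  define n where "n = CARD('n)"
  have "(\<Sum>A | A \<noteq> (UNIV :: 'n set). 1 / real ((n - 1) choose card A))
      = (\<Sum>s<n. real (card {A. A \<noteq> (UNIV :: 'n set) \<and> card A = s}) * (1 / real ((n - 1) choose s)))"
    by (rule sum_card_fibres) (auto simp: n_def card_less_CARD)
  also have "\<dots> = (\<Sum>s<n. real n / real (n - s))"
  proof (rule sum.cong[OF refl])
    fix s assume "s \<in> {..<n}"
    then have "{A. A \<noteq> (UNIV :: 'n set) \<and> card A = s} = {A. A \<subseteq> UNIV \<and> card A = s}"
      unfolding n_def by auto
    then have "card {A. A \<noteq> (UNIV :: 'n set) \<and> card A = s} = n choose s"
      using n_subsets[of "UNIV :: 'n set" s] unfolding n_def by simp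
    moreover have "real (n - s) * real (n choose s) = real n * real ((n - 1) choose s)"
      by (metis binomial_absorb_comp of_nat_mult)
    moreover have "n - s > 0" and "(n - 1) choose s > 0"
      using \<open>s \<in> {..<n}\<close> by auto
    ultimately show "real (card {A. A \<noteq> (UNIV :: 'n set) \<and> card A = s}) * (1 / real ((n - 1) choose s))
        = real n / real (n - s)"
      by (simp add: field_simps)
  qed
  also have "\<dots> = real n * (\<Sum>s<n. inverse (real (Suc s)))"
    unfolding sum_distrib_left divide_inverse
    by (rule sum.reindex_bij_witness[of _ "\<lambda>s. n - Suc s" "\<lambda>s. n - Suc s"]) auto
  finally show ?thesis
    unfolding n_def harm_altdef .
qed

lemma sum_inverse_binomial_proper_spanning_sets:
  fixes G :: "'a::field^'n::finite^'k::finite"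
  assumes "is_generator_matrix G C"
  shows "(\<Sum>A | A \<noteq> UNIV \<and> cols_span G A. 1 / real ((CARD('n) - 1) choose card A))
     = (\<Sum>s=CARD('k)..CARD('n)-1. real (beta (s - CARD('k)) (dual_code C) (CARD('n) - s))
                                     / real ((CARD('n) - 1) choose s))"
proof -
  have "(\<Sum>A | A \<noteq> UNIV \<and> cols_span G A. 1 / real ((CARD('n) - 1) choose card A))
      = (\<Sum>s=CARD('k)..CARD('n)-1. real (card {A. (A \<noteq> UNIV \<and> cols_span G A) \<and> card A = s})
                                       * (1 / real ((CARD('n) - 1) choose s)))"
  proof (rule sum_card_fibres)
    fix A :: "'n set" assume "A \<noteq> UNIV \<and> cols_span G A"
    then show "card A \<in> {CARD('k)..CARD('n)-1}"
      using card_less_CARD[of A] cols_span_card_ge[of G A] by auto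
  qed simp
  also have "\<dots> = (\<Sum>s=CARD('k)..CARD('n)-1. real (beta (s - CARD('k)) (dual_code C) (CARD('n) - s))
                                              / real ((CARD('n) - 1) choose s))"
  proof (rule sum.cong[OF refl])
    fix s assume s: "s \<in> {CARD('k)..CARD('n)-1}"
    then have "s \<le> CARD('n) - 1"
      by simp
    moreover have "0 < CARD('n)"
      by simp
    ultimately have s_less: "s < CARD('n)"
      by arith
    then have "{A. (A \<noteq> UNIV \<and> cols_span G A) \<and> card A = s} = {A. cols_span G A \<and> card A = s}"
      by auto
    then show "real (card {A. (A \<noteq> UNIV \<and> cols_span G A) \<and> card A = s}) * (1 / real ((CARD('n) - 1) choose s))
        = real (beta (s - CARD('k)) (dual_code C) (CARD('n) - s)) / real ((CARD('n) - 1) choose s)"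
      using card_cols_span_eq_beta[OF assms, of s] s s_less by simp
  qed
  finally show ?thesis .
qed

theorem mainTheorem5:
  fixes C :: "('a::{field,finite}^'n::finite) set"
    and G :: "'a^'n^'k::finite"
    and n k :: nat
  assumes "CARD('n) = n" and "CARD('k) = k"
    and "2 \<le> k" and "k \<le> n"
    and "vec.subspace C" and "vec.dim C = k"
    and "is_generator_matrix G C"
  shows "expected_draws G =
           real n * harm n
           - (\<Sum>s=k..n-1. real (beta (s - k) (dual_code C) (n - s)) / real ((n - 1) choose s))"
proof -
  let ?P = "cols_span G"
  let ?w = "\<lambda>A :: 'n set. 1 / real ((n - 1) choose card A)"
  have span_UNIV: "?P UNIV"
    using generator_matrix_cols_span_UNIV[OF assms(7)] .
  have "expected_draws G = (\<Sum>A | \<not> ?P A. ?w A)"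
    using expected_stopping_time[OF mono_cols_span span_UNIV]
    unfolding expected_draws_def prob_stop_at_def stopping_draws_def assms(1)
    by (rule sums_unique[symmetric])
  also have "\<dots> = (\<Sum>A | A \<noteq> UNIV. ?w A) - (\<Sum>A | A \<noteq> UNIV \<and> ?P A. ?w A)"
  proof -
    have "{A. \<not> ?P A} = {A. A \<noteq> UNIV} - {A. A \<noteq> UNIV \<and> ?P A}"
      using span_UNIV by auto
    then show ?thesis
      by (simp only:) (rule sum_diff; auto)
  qed
  finally show ?thesis
    using sum_inverse_binomial_proper_subsets[where 'n = 'n]
      sum_inverse_binomial_proper_spanning_sets[OF assms(7)]
    unfolding assms(1,2) by simp
qed

end
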